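(* Let $X$ be a finite poset. If $X$ is homologically admissible, then $X$ is two-wide.
   Context: A finite poset $(X,\le)$ is regarded as a finite $T_0$ topological space whose open sets are the down-sets; homology means singular homology of this space. Write $y\prec x$ if $y<x$ and there is no $z$ with $y<z<x$; the Hasse diagram $\mathcal H(X)$ has edges $(w,x)$ with $w\prec x$. Let $\widehat U_x=\{w\in X: w<x\}$. A space is acyclic if it is nonempty and all its reduced homology groups vanish. An edge $(w,x)$ of $\mathcal H(X)$ is homologically admissible if $\widehat U_x-\{w\}$ is acyclic; $X$ is homologically admissible if all its edges are. A poset $X$ is two-wide if for any $x,z,y\in X$ with $x\prec z\prec y$ there exists $z'\in X$, $z'\neq z$, with $x\prec z'\prec y$. *)

theory Defs
  imports "HOL-Homology.Homology"
begin

definition finite_poset :: "'a set \<Rightarrow> ('a \<Rightarrow> 'a \<Rightarrow> bool) \<Rightarrow> bool" where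
  "finite_poset X leq \<equiv> finite X \<and> (\<forall>x\<in>X. leq x x)
     \<and> (\<forall>x\<in>X. \<forall>y\<in>X. leq x y \<and> leq y x \<longrightarrow> x = y)
     \<and> (\<forall>x\<in>X. \<forall>y\<in>X. \<forall>z\<in>X. leq x y \<and> leq y z \<longrightarrow> leq x z)"

definition pstrict :: "('a \<Rightarrow> 'a \<Rightarrow> bool) \<Rightarrow> 'a \<Rightarrow> 'a \<Rightarrow> bool" where
  "pstrict leq x y \<equiv> leq x y \<and> x \<noteq> y"

definition poset_topology :: "'a set \<Rightarrow> ('a \<Rightarrow> 'a \<Rightarrow> bool) \<Rightarrow> 'a topology" where
  "poset_topology X leq = topology (\<lambda>U. U \<subseteq> X \<and> (\<forall>x\<in>U. \<forall>y\<in>X. leq y x \<longrightarrow> y \<in> U))"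

definition covers :: "'a set \<Rightarrow> ('a \<Rightarrow> 'a \<Rightarrow> bool) \<Rightarrow> 'a \<Rightarrow> 'a \<Rightarrow> bool" where
  "covers X leq y x \<equiv> y \<in> X \<and> x \<in> X \<and> pstrict leq y x
     \<and> \<not> (\<exists>z\<in>X. pstrict leq y z \<and> pstrict leq z x)"

definition hatU :: "'a set \<Rightarrow> ('a \<Rightarrow> 'a \<Rightarrow> bool) \<Rightarrow> 'a \<Rightarrow> 'a set" where
  "hatU X leq x = {w \<in> X. pstrict leq w x}"

definition acyclic_space :: "'a topology \<Rightarrow> bool" where
  "acyclic_space T \<equiv> topspace T \<noteq> {} \<and> (\<forall>p::int. trivial_group (reduced_homology_group p T))"

definition homologically_admissible_edge ::
    "'a set \<Rightarrow> ('a \<Rightarrow> 'a \<Rightarrow> bool) \<Rightarrow> 'a \<Rightarrow> 'a \<Rightarrow> bool" where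
  "homologically_admissible_edge X leq w x \<equiv>
     acyclic_space (subtopology (poset_topology X leq) (hatU X leq x - {w}))"

definition homologically_admissible :: "'a set \<Rightarrow> ('a \<Rightarrow> 'a \<Rightarrow> bool) \<Rightarrow> bool" where
  "homologically_admissible X leq \<equiv>
     \<forall>w x. covers X leq w x \<longrightarrow> homologically_admissible_edge X leq w x"

definition two_wide :: "'a set \<Rightarrow> ('a \<Rightarrow> 'a \<Rightarrow> bool) \<Rightarrow> bool" where
  "two_wide X leq \<equiv> \<forall>x\<in>X. \<forall>z\<in>X. \<forall>y\<in>X. covers X leq x z \<and> covers X leq z y \<longrightarrow>
     (\<exists>z'\<in>X. z' \<noteq> z \<and> covers X leq x z' \<and> covers X leq z' y)"

lemma istopology_poset:
  "istopology (\<lambda>U. U \<subseteq> X \<and> (\<forall>x\<in>U. \<forall>y\<in>X. leq y x \<longrightarrow> y \<in> U))"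
  unfolding istopology_def by blast

lemma openin_poset_topology:
  "openin (poset_topology X leq) U \<longleftrightarrow> U \<subseteq> X \<and> (\<forall>x\<in>U. \<forall>y\<in>X. leq y x \<longrightarrow> y \<in> U)"
  unfolding poset_topology_def using istopology_poset[of X leq] by simp

end

theory Submission
  imports Defs
begin

text \<open>
  Write \<open>U v\<close> for the down-set of \<open>v\<close>, the smallest open set containing \<open>v\<close>; it is
  contractible. For a cover \<open>w \<prec> v\<close>, the space \<open>hatU v\<close> is obtained from the open set
  \<open>hatU v - {w}\<close>, acyclic by admissibility, by attaching \<open>U w\<close> along \<open>hatU w\<close>, so by
  excision its reduced homology is that of \<open>hatU w\<close> shifted up by one degree. Inductively the
  reduced homology of each \<open>hatU v\<close> is nonzero in exactly one degree \<open>d v\<close> (with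
  \<open>d v = -1\<close> if \<open>hatU v\<close> is empty), and \<open>d v = d w + 1\<close> along covers, so \<open>d\<close> grades
  the poset.

  Now let \<open>x \<prec> z \<prec> y\<close> with \<open>z\<close> the only element strictly between \<open>x\<close> and \<open>y\<close>, and
  put \<open>B = hatU y - {x, z}\<close>, an open set. Attaching \<open>U z\<close> to \<open>B\<close> along the acyclic
  \<open>hatU z - {x}\<close> gives \<open>hatU y\<close>, so \<open>B\<close> has nonzero reduced homology in degree \<open>d y\<close>.
  Attaching \<open>U x\<close> to \<open>B\<close> along \<open>hatU x\<close> gives the acyclic \<open>hatU y - {z}\<close>, which forces
  that degree to be \<open>d x\<close>; but \<open>d y = d x + 2\<close>.
\<close>

lemma trivial_group_of_exact_seq:
  assumes "exact_seq ([G1, G2, G3], [f, g])" "trivial_group G1" "trivial_group G3"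
  shows "trivial_group G2"
proof -
  have G: "f \<in> hom G2 G1" "kernel G2 G1 f = g ` carrier G3" "group_hom G3 G2 g"
    using assms(1) by (simp_all add: exact_seq_cons_iff)
  have "kernel G2 G1 f = carrier G2"
    using G(1) assms(2) unfolding kernel_def trivial_group_def by (auto dest: hom_in_carrier)
  moreover have "g ` carrier G3 = {\<one>\<^bsub>G2\<^esub>}"
    using assms(3) G(3) unfolding trivial_group_def by (simp add: group_hom.hom_one)
  ultimately show ?thesis
    using G(2,3) unfolding trivial_group_def group_hom_def group_hom_axioms_def by simp
qed

lemma trivial_relative_homology_of_reduced:
  assumes "topspace Y \<inter> A \<noteq> {}"
    and "trivial_group (reduced_homology_group p Y)"
    and "trivial_group (reduced_homology_group (p - 1) (subtopology Y A))"
  shows "trivial_group (relative_homology_group p Y A)"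
  using homology_exactness_reduced_1[OF assms(1)] assms(3,2) by (rule trivial_group_of_exact_seq)

lemma trivial_reduced_homology_subtopology_of_relative:
  assumes "trivial_group (reduced_homology_group (p - 1) Y)"
    and "trivial_group (relative_homology_group p Y A)"
  shows "trivial_group (reduced_homology_group (p - 1) (subtopology Y A))"
  using homology_exactness_reduced_2 assms by (rule trivial_group_of_exact_seq)

lemma trivial_reduced_homology_of_relative:
  assumes "trivial_group (relative_homology_group p Y A)"
    and "trivial_group (reduced_homology_group p (subtopology Y A))"
  shows "trivial_group (reduced_homology_group p Y)"
  using homology_exactness_reduced_3 assms by (rule trivial_group_of_exact_seq)

lemma trivial_reduced_homology_iff_relative:
  assumes "topspace Y \<inter> A \<noteq> {}"
    and "\<And>q. trivial_group (reduced_homology_group q (subtopology Y A))"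
  shows "trivial_group (reduced_homology_group p Y) \<longleftrightarrow> trivial_group (relative_homology_group p Y A)"
  using trivial_relative_homology_of_reduced[OF assms(1)] trivial_reduced_homology_of_relative assms(2)
  by blast

lemma isomorphic_relative_homology_open_cover:
  assumes "openin Y A" "openin Y C" "A \<union> C = topspace Y"
  shows "relative_homology_group p (subtopology Y C) (A \<inter> C) \<cong> relative_homology_group p Y A"
proof -
  have "Abstract_Topology.closure_of Y (topspace Y - C) \<subseteq> Y interior_of A"
    using assms by (auto simp: closure_of_closedin interior_of_openin closedin_diff)
  moreover have "topspace Y - (topspace Y - C) = C" "A - (topspace Y - C) = A \<inter> C"
    using assms openin_subset[OF assms(2)] by auto
  ultimately have "hom_induced p (subtopology Y C) (A \<inter> C) Y A id
      \<in> iso (relative_homology_group p (subtopology Y C) (A \<inter> C)) (relative_homology_group p Y A)"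
    using homology_excision_axiom[of Y "topspace Y - C" A "topspace Y" p] openin_subset[OF assms(1)]
    by simp
  then show ?thesis by (rule is_isoI)
qed

lemma trivial_homology_group_contractible_iff:
  assumes "contractible_space Y" "topspace Y \<noteq> {}"
  shows "trivial_group (homology_group p Y) \<longleftrightarrow> p \<noteq> 0"
proof (cases "p = 0")
  case True
  have "homology_group 0 Y \<cong> integer_group"
    using assms contractible_imp_path_connected_space isomorphic_integer_zeroth_homology_group by blast
  then show ?thesis
    using True isomorphic_group_triviality[of "homology_group 0 Y" integer_group] by simp
next
  case False
  then show ?thesis
    using trivial_reduced_homology_group_contractible_space[OF assms(1), of p]
    by (simp add: un_reduced_homology_group)
qed

locale fin_poset =
  fixes X :: "'a set" and leq :: "'a \<Rightarrow> 'a \<Rightarrow> bool"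
  assumes finite_poset: "finite_poset X leq"
begin

abbreviation pless (infix "\<lless>" 50) where "a \<lless> b \<equiv> pstrict leq a b"
abbreviation "T \<equiv> poset_topology X leq"
abbreviation "subsp S \<equiv> subtopology T S"
abbreviation "hU v \<equiv> hatU X leq v"

definition U :: "'a \<Rightarrow> 'a set" where "U v = {u \<in> X. leq u v}"

lemma finite_X: "finite X"
  and leq_refl: "x \<in> X \<Longrightarrow> leq x x"
  and leq_antisym: "x \<in> X \<Longrightarrow> y \<in> X \<Longrightarrow> leq x y \<Longrightarrow> leq y x \<Longrightarrow> x = y"
  and leq_trans: "x \<in> X \<Longrightarrow> y \<in> X \<Longrightarrow> z \<in> X \<Longrightarrow> leq x y \<Longrightarrow> leq y z \<Longrightarrow> leq x z"
  using finite_poset unfolding finite_poset_def by blast+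

lemma leq_pless_trans: "a \<in> X \<Longrightarrow> b \<in> X \<Longrightarrow> c \<in> X \<Longrightarrow> leq a b \<Longrightarrow> b \<lless> c \<Longrightarrow> a \<lless> c"
  and pless_leq_trans: "a \<in> X \<Longrightarrow> b \<in> X \<Longrightarrow> c \<in> X \<Longrightarrow> a \<lless> b \<Longrightarrow> leq b c \<Longrightarrow> a \<lless> c"
  and pless_trans: "a \<in> X \<Longrightarrow> b \<in> X \<Longrightarrow> c \<in> X \<Longrightarrow> a \<lless> b \<Longrightarrow> b \<lless> c \<Longrightarrow> a \<lless> c"
  unfolding pstrict_def using leq_trans leq_antisym by blast+

lemma topspace_T [simp]: "topspace T = X"
proof (rule subset_antisym)
  show "topspace T \<subseteq> X" using openin_topspace[of T] by (simp only: openin_poset_topology)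
  show "X \<subseteq> topspace T" using openin_subset[of T X] by (simp add: openin_poset_topology)
qed

lemma topspace_subsp: "S \<subseteq> X \<Longrightarrow> topspace (subsp S) = S"
  by (simp add: inf.absorb2)

lemma subtopology_subsp: "A \<subseteq> S \<Longrightarrow> subtopology (subsp S) A = subsp A"
  by (simp add: subtopology_subtopology inf.absorb2)

lemma U_subset: "U v \<subseteq> X"
  by (auto simp: U_def)

lemma openin_U: "v \<in> X \<Longrightarrow> openin T (U v)"
  unfolding U_def openin_poset_topology using leq_trans by blast

lemma U_eq_insert: "v \<in> X \<Longrightarrow> U v = insert v (hU v)"
  unfolding U_def hatU_def pstrict_def using leq_refl by blast

lemma hU_subset: "hU v \<subseteq> X"
  by (auto simp: hatU_def)

text \<open>The homotopy is the identity for \<open>t < 1\<close> and the constant \<open>v\<close> at \<open>t = 1\<close>; it is continuous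
  because the only open set containing the maximum \<open>v\<close> is \<open>U v\<close> itself.\<close>
lemma contractible_U:
  assumes v: "v \<in> X"
  shows "contractible_space (subsp (U v))"
  unfolding contractible_space_def homotopic_with_def
proof (intro exI conjI)
  let ?I = "top_of_set {0..1::real}"
  let ?h = "\<lambda>(t::real, u). if t < 1 then u else v"
  have UX: "topspace (subsp (U v)) = U v" using topspace_subsp[OF U_subset] .
  have vU: "v \<in> U v" using v by (simp add: U_eq_insert)
  have topP: "topspace (prod_topology ?I (subsp (U v))) = {0..1} \<times> U v"
    by (simp only: topspace_prod_topology UX topspace_euclidean_subtopology)
  show "continuous_map (prod_topology ?I (subsp (U v))) (subsp (U v)) ?h"
    unfolding continuous_map_def
  proof (intro conjI allI impI)
    show "?h \<in> topspace (prod_topology ?I (subsp (U v))) \<rightarrow> topspace (subsp (U v))"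
      unfolding topP UX using vU by auto
  next
    fix W assume W: "openin (subsp (U v)) W"
    then have "openin T W" "W \<subseteq> U v"
      using openin_open_subtopology[OF openin_U[OF v]] by simp_all
    let ?P = "{x \<in> topspace (prod_topology ?I (subsp (U v))). ?h x \<in> W}"
    show "openin (prod_topology ?I (subsp (U v))) ?P"
    proof (cases "v \<in> W")
      case True
      then have "W = U v"
        using \<open>openin T W\<close> \<open>W \<subseteq> U v\<close> unfolding openin_poset_topology U_def by blast
      then have "?P = topspace (prod_topology ?I (subsp (U v)))"
        unfolding topP using True by auto
      then show ?thesis by (metis openin_topspace)
    next
      case False
      then have "?P = ({0..1} \<inter> {..<1}) \<times> W"
        unfolding topP using False \<open>W \<subseteq> U v\<close> by (auto split: if_splits)
      moreover have "openin ?I ({0..1} \<inter> {..<1})" by (simp add: openin_open_Int)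
      ultimately show ?thesis using W by (simp add: openin_prod_Times_iff)
    qed
  qed
  show "\<forall>x. ?h (0, x) = id x" "\<forall>x. ?h (1, x) = v" by simp_all
qed simp

lemma isomorphic_relative_homology_attach_U:
  assumes A: "openin T A" and v: "v \<in> X" and S: "A \<union> U v = S"
  shows "relative_homology_group p (subsp (U v)) (A \<inter> U v) \<cong> relative_homology_group p (subsp S) A"
proof -
  have S_open: "openin T S" using S A openin_U[OF v] by blast
  have S_sub: "S \<subseteq> X" using openin_subset[OF S_open] by simp
  have "openin (subsp S) A" "openin (subsp S) (U v)"
    using S A openin_U[OF v] openin_open_subtopology[OF S_open] by blast+
  moreover have "A \<union> U v = topspace (subsp S)" using S topspace_subsp[OF S_sub] by simp
  ultimately show ?thesis
    using isomorphic_relative_homology_open_cover[of "subsp S" A "U v" p] subtopology_subsp[of "U v" S] S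
    by auto
qed

lemma trivial_relative_homology_attach_U_iff:
  assumes "openin T A" "v \<in> X" "A \<union> U v = S" "A \<inter> U v \<noteq> {}"
  shows "trivial_group (relative_homology_group p (subsp S) A)
     \<longleftrightarrow> trivial_group (reduced_homology_group (p - 1) (subsp (A \<inter> U v)))"
proof -
  have "topspace (subsp (U v)) \<inter> (A \<inter> U v) \<noteq> {}"
    using assms(4) topspace_subsp[OF U_subset] by auto
  from iso_relative_homology_of_contractible[OF contractible_U[OF assms(2)] this, of p]
  have "relative_homology_group p (subsp (U v)) (A \<inter> U v) \<cong> reduced_homology_group (p - 1) (subsp (A \<inter> U v))"
    using subtopology_subsp[of "A \<inter> U v" "U v"] by (auto intro: is_isoI)
  then show ?thesis
    using isomorphic_relative_homology_attach_U[OF assms(1-3), of p]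
    by (metis group_reduced_homology_group group_relative_homology_group isomorphic_group_triviality)
qed

lemma trivial_relative_homology_attach_disjoint_U_iff:
  assumes "openin T A" "v \<in> X" "A \<union> U v = S" "A \<inter> U v = {}"
  shows "trivial_group (relative_homology_group p (subsp S) A) \<longleftrightarrow> p \<noteq> 0"
proof -
  have "topspace (subsp (U v)) \<noteq> {}"
    using topspace_subsp[OF U_subset] U_eq_insert[OF assms(2)] by auto
  then have "trivial_group (homology_group p (subsp (U v))) \<longleftrightarrow> p \<noteq> 0"
    by (rule trivial_homology_group_contractible_iff[OF contractible_U[OF assms(2)]])
  then show ?thesis
    using isomorphic_relative_homology_attach_U[OF assms(1-3), of p] assms(4)
    by (metis group_relative_homology_group isomorphic_group_triviality)
qed

lemma hU_mono:
  assumes "u \<in> X" "v \<in> X" "leq u v"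
  shows "hU u \<subseteq> hU v"
  using pless_leq_trans[OF _ assms(1,2) _ assms(3)] by (auto simp: hatU_def)

lemma U_subset_hU:
  assumes "u \<in> X" "v \<in> X" "u \<lless> v"
  shows "U u \<subseteq> hU v"
  using leq_pless_trans[OF _ assms(1,2) _ assms(3)] by (auto simp: hatU_def U_def)

lemma cover_decomposition:
  assumes c: "covers X leq w v"
  shows "openin T (hU v - {w})" "(hU v - {w}) \<union> U w = hU v" "(hU v - {w}) \<inter> U w = hU w"
proof -
  have w: "w \<in> X" "v \<in> X" "w \<lless> v" using c by (simp_all add: covers_def)
  show "openin T (hU v - {w})"
    unfolding openin_poset_topology
  proof (intro conjI ballI impI)
    show "hU v - {w} \<subseteq> X" using hU_subset by blast
    fix x y assume x: "x \<in> hU v - {w}" and y: "y \<in> X" "leq y x"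
    then have x': "x \<in> X" "x \<lless> v" "x \<noteq> w" by (auto simp: hatU_def)
    have "y \<lless> v" by (rule leq_pless_trans[OF y(1) x'(1) w(2) y(2) x'(2)])
    moreover have "y \<noteq> w"
    proof
      assume "y = w"
      with y x' have "w \<lless> x" by (simp add: pstrict_def)
      with c x' show False unfolding covers_def by blast
    qed
    ultimately show "y \<in> hU v - {w}" using y(1) by (simp add: hatU_def)
  qed
  show "(hU v - {w}) \<union> U w = hU v"
    using U_subset_hU[OF w] U_eq_insert[OF w(1)] by blast
  have "hU w \<subseteq> hU v" using hU_mono[OF w(1,2)] w(3) by (simp add: pstrict_def)
  then show "(hU v - {w}) \<inter> U w = hU w"
    unfolding hatU_def U_def pstrict_def by blast
qed

lemma unique_middle_decomposition:
  assumes xz: "covers X leq x z" and zy: "covers X leq z y"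
    and unique: "\<And>u. u \<in> X \<Longrightarrow> x \<lless> u \<Longrightarrow> u \<lless> y \<Longrightarrow> u = z"
  defines "B \<equiv> hU y - {x, z}"
  shows "openin T B" "B \<union> U z = hU y" "B \<inter> U z = hU z - {x}"
    "B \<union> U x = hU y - {z}" "B \<inter> U x = hU x"
proof -
  have X: "x \<in> X" "z \<in> X" "y \<in> X" and "x \<lless> z" "z \<lless> y"
    using xz zy by (simp_all add: covers_def)
  then have "x \<lless> y" using pless_trans by blast
  show "openin T B"
    unfolding openin_poset_topology
  proof (intro conjI ballI impI)
    show "B \<subseteq> X" using hU_subset by (auto simp: B_def)
    fix b t assume b: "b \<in> B" and t: "t \<in> X" "leq t b"
    then have b': "b \<in> X" "b \<lless> y" "b \<noteq> x" "b \<noteq> z" by (auto simp: B_def hatU_def)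
    have "t \<lless> y" by (rule leq_pless_trans[OF t(1) b'(1) X(3) t(2) b'(2)])
    moreover have "t \<noteq> z"
    proof
      assume "t = z"
      with t b' have "z \<lless> b" by (simp add: pstrict_def)
      with zy b' show False unfolding covers_def by blast
    qed
    moreover have "t \<noteq> x"
    proof
      assume "t = x"
      with t b' have "x \<lless> b" by (simp add: pstrict_def)
      with unique b' show False by blast
    qed
    ultimately show "t \<in> B" using t(1) by (simp add: B_def hatU_def)
  qed
  have "leq x z" "\<not> leq z x" using \<open>x \<lless> z\<close> leq_antisym[OF X(1,2)] by (auto simp: pstrict_def)
  have Uz: "U z = insert z (hU z)" "U z \<subseteq> hU y" "x \<in> U z" "z \<notin> hU z"
    using U_eq_insert[OF X(2)] U_subset_hU[OF X(2,3) \<open>z \<lless> y\<close>] \<open>leq x z\<close> X(1)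
    by (auto simp: U_def hatU_def pstrict_def)
  have Ux: "U x = insert x (hU x)" "U x \<subseteq> hU y" "z \<notin> U x" "x \<notin> hU x" "z \<notin> hU x"
    using U_eq_insert[OF X(1)] U_subset_hU[OF X(1,3) \<open>x \<lless> y\<close>] \<open>\<not> leq z x\<close>
    by (auto simp: U_def hatU_def pstrict_def)
  show "B \<union> U z = hU y" unfolding B_def using Uz(1-3) by blast
  show "B \<inter> U z = hU z - {x}" unfolding B_def using Uz(1,2,4) by blast
  show "B \<union> U x = hU y - {z}" unfolding B_def using Ux(1-3) by blast
  show "B \<inter> U x = hU x" unfolding B_def using Ux(1,2,4,5) by blast
qed

lemma card_hU_strict_mono:
  assumes "u \<in> X" "v \<in> X" "u \<lless> v"
  shows "card (hU u) < card (hU v)"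
proof (rule psubset_card_mono)
  show "finite (hU v)" using finite_X hU_subset finite_subset by blast
  have "u \<in> hU v" "u \<notin> hU u" using assms by (auto simp: hatU_def pstrict_def)
  then show "hU u \<subset> hU v" using hU_mono[OF assms(1,2)] assms(3) by (auto simp: pstrict_def)
qed

lemma exists_cover_above:
  assumes u: "u \<in> X" "u \<lless> v" and v: "v \<in> X"
  obtains m where "leq u m" "covers X leq m v"
proof -
  define S where "S = {t \<in> X. leq u t \<and> t \<lless> v}"
  \<comment> \<open>an element of \<open>S\<close> with the largest \<open>hU\<close> is maximal in \<open>S\<close>, hence covered by \<open>v\<close>\<close>
  have "finite S" using finite_X by (simp add: S_def)
  have "u \<in> S" using u leq_refl[OF u(1)] by (simp add: S_def)
  then obtain m where m: "m \<in> S" "Max ((\<lambda>s. card (hU s)) ` S) = card (hU m)"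
    using obtains_MAX[OF \<open>finite S\<close>] by blast
  have m_max: "card (hU s) \<le> card (hU m)" if "s \<in> S" for s
    using Max_ge[OF finite_imageI[OF \<open>finite S\<close>] imageI[OF that, of "\<lambda>s. card (hU s)"]] m(2)
    by simp
  have "covers X leq m v"
    unfolding covers_def
  proof (intro conjI notI)
    assume "\<exists>z\<in>X. m \<lless> z \<and> z \<lless> v"
    then obtain z where z: "z \<in> X" "m \<lless> z" "z \<lless> v" by blast
    have "m \<in> X" "leq u m" using m(1) by (simp_all add: S_def)
    then have "leq u z" using leq_trans[OF u(1) _ z(1)] z(2) by (simp add: pstrict_def)
    then have "z \<in> S" using z by (simp add: S_def)
    then show False using m_max[of z] m(1) z card_hU_strict_mono[of m z] by (simp add: S_def)
  qed (use m(1) v in \<open>auto simp: S_def\<close>)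
  then show ?thesis using m(1) that unfolding S_def by blast
qed

text \<open>The empty set gets degree \<open>-1\<close>, as for the reduced homology of the empty space in the
  usual convention; in HOL all reduced homology groups of the empty space are trivial.\<close>
definition homology_concentrated :: "'a set \<Rightarrow> int \<Rightarrow> bool" where
  "homology_concentrated S n \<longleftrightarrow>
     (S = {} \<and> n = -1) \<or>
     (S \<noteq> {} \<and> (\<forall>k. \<not> trivial_group (reduced_homology_group k (subsp S)) \<longleftrightarrow> k = n))"

lemma homology_concentrated_unique:
  "homology_concentrated S n \<Longrightarrow> homology_concentrated S m \<Longrightarrow> n = m"
  unfolding homology_concentrated_def by auto

end

locale admissible_poset = fin_poset +
  assumes admissible: "homologically_admissible X leq"
begin

lemma acyclic_hU_minus_cover:
  assumes "covers X leq w v"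
  shows "hU v - {w} \<noteq> {}" "trivial_group (reduced_homology_group p (subsp (hU v - {w})))"
proof -
  have "acyclic_space (subsp (hU v - {w}))"
    using admissible assms
    unfolding homologically_admissible_def homologically_admissible_edge_def by blast
  moreover have "topspace (subsp (hU v - {w})) = hU v - {w}"
    using hU_subset by (intro topspace_subsp) blast
  ultimately show "hU v - {w} \<noteq> {}" "trivial_group (reduced_homology_group p (subsp (hU v - {w})))"
    unfolding acyclic_space_def by auto
qed

lemma trivial_reduced_homology_hU_iff_relative:
  assumes "covers X leq w v"
  shows "trivial_group (reduced_homology_group p (subsp (hU v)))
     \<longleftrightarrow> trivial_group (relative_homology_group p (subsp (hU v)) (hU v - {w}))"
proof (rule trivial_reduced_homology_iff_relative)
  show "topspace (subsp (hU v)) \<inter> (hU v - {w}) \<noteq> {}"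
    using acyclic_hU_minus_cover(1)[OF assms] topspace_subsp[OF hU_subset] by auto
  show "trivial_group (reduced_homology_group q (subtopology (subsp (hU v)) (hU v - {w})))" for q
    using acyclic_hU_minus_cover(2)[OF assms] subtopology_subsp[of "hU v - {w}" "hU v"] by auto
qed

lemma trivial_reduced_homology_hU_cover_shift:
  assumes c: "covers X leq w v" and ne: "hU w \<noteq> {}"
  shows "trivial_group (reduced_homology_group p (subsp (hU v)))
     \<longleftrightarrow> trivial_group (reduced_homology_group (p - 1) (subsp (hU w)))"
proof -
  note d = cover_decomposition[OF c]
  have "w \<in> X" using c by (simp add: covers_def)
  have "trivial_group (relative_homology_group p (subsp (hU v)) (hU v - {w}))
     \<longleftrightarrow> trivial_group (reduced_homology_group (p - 1) (subsp ((hU v - {w}) \<inter> U w)))"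
    by (rule trivial_relative_homology_attach_U_iff[OF d(1) \<open>w \<in> X\<close> d(2)]) (use d(3) ne in simp)
  then show ?thesis using trivial_reduced_homology_hU_iff_relative[OF c] d(3) by simp
qed

lemma trivial_reduced_homology_hU_cover_minimal:
  assumes c: "covers X leq w v" and e: "hU w = {}"
  shows "trivial_group (reduced_homology_group p (subsp (hU v))) \<longleftrightarrow> p \<noteq> 0"
proof -
  note d = cover_decomposition[OF c]
  have "w \<in> X" using c by (simp add: covers_def)
  have "trivial_group (relative_homology_group p (subsp (hU v)) (hU v - {w})) \<longleftrightarrow> p \<noteq> 0"
    by (rule trivial_relative_homology_attach_disjoint_U_iff[OF d(1) \<open>w \<in> X\<close> d(2)]) (use d(3) e in simp)
  then show ?thesis using trivial_reduced_homology_hU_iff_relative[OF c] by simp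
qed

lemma homology_concentrated_hU_cover:
  assumes c: "covers X leq w v" and w: "homology_concentrated (hU w) m"
  shows "homology_concentrated (hU v) (m + 1)"
proof -
  have "hU v \<noteq> {}" using c by (auto simp: covers_def hatU_def)
  moreover have "\<not> trivial_group (reduced_homology_group k (subsp (hU v))) \<longleftrightarrow> k = m + 1" for k
  proof (cases "hU w = {}")
    case True
    then show ?thesis
      using w trivial_reduced_homology_hU_cover_minimal[OF c] by (simp add: homology_concentrated_def)
  next
    case False
    then have "\<not> trivial_group (reduced_homology_group (k - 1) (subsp (hU w))) \<longleftrightarrow> k - 1 = m"
      using w by (simp add: homology_concentrated_def)
    then show ?thesis
      using trivial_reduced_homology_hU_cover_shift[OF c False, of k] by linarith
  qed
  ultimately show ?thesis by (simp add: homology_concentrated_def)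
qed

lemma homology_concentrated_hU_exists:
  assumes "v \<in> X"
  shows "\<exists>n. homology_concentrated (hU v) n"
  using assms
proof (induction "card (hU v)" arbitrary: v rule: less_induct)
  case less
  show ?case
  proof (cases "hU v = {}")
    case True
    then show ?thesis by (auto simp: homology_concentrated_def)
  next
    case False
    then obtain u where "u \<in> X" "u \<lless> v" by (auto simp: hatU_def)
    then obtain m where c: "covers X leq m v"
      using exists_cover_above less.prems by blast
    then have "m \<in> X" "card (hU m) < card (hU v)"
      using card_hU_strict_mono less.prems by (auto simp: covers_def)
    then obtain k where "homology_concentrated (hU m) k" using less.hyps by blast
    then show ?thesis using homology_concentrated_hU_cover[OF c] by blast
  qed
qed

definition hdeg :: "'a \<Rightarrow> int" where
  "hdeg v = (THE n. homology_concentrated (hU v) n)"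

lemma homology_concentrated_hdeg: "v \<in> X \<Longrightarrow> homology_concentrated (hU v) (hdeg v)"
  unfolding hdeg_def
  using homology_concentrated_hU_exists homology_concentrated_unique by (metis theI)

lemma hdeg_cover: "covers X leq w v \<Longrightarrow> hdeg v = hdeg w + 1"
  using homology_concentrated_hdeg homology_concentrated_hU_cover homology_concentrated_unique
  by (metis covers_def)

lemma hdeg_strict_mono:
  assumes "u \<in> X" "v \<in> X" "u \<lless> v"
  shows "hdeg u < hdeg v"
  using assms
proof (induction "card (hU v)" arbitrary: v rule: less_induct)
  case less
  obtain m where m: "leq u m" "covers X leq m v"
    using exists_cover_above less.prems by blast
  then have "m \<in> X" "m \<lless> v" by (simp_all add: covers_def)
  show ?case
  proof (cases "m = u")
    case True
    then show ?thesis using hdeg_cover[OF m(2)] by simp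
  next
    case False
    then have "u \<lless> m" using m(1) by (simp add: pstrict_def)
    then have "hdeg u < hdeg m"
      using less.hyps[OF card_hU_strict_mono] less.prems \<open>m \<in> X\<close> \<open>m \<lless> v\<close> by blast
    then show ?thesis using hdeg_cover[OF m(2)] by simp
  qed
qed

lemma covers_through_between:
  assumes xz: "covers X leq x z" and zy: "covers X leq z y"
    and u: "u \<in> X" "x \<lless> u" "u \<lless> y"
  shows "covers X leq x u" "covers X leq u y"
proof -
  have X: "x \<in> X" "y \<in> X" using xz zy by (simp_all add: covers_def)
  have "hdeg y = hdeg x + 2" using hdeg_cover[OF xz] hdeg_cover[OF zy] by simp
  then have "hdeg u = hdeg x + 1" "hdeg y = hdeg u + 1"
    using hdeg_strict_mono[OF X(1) u(1,2)] hdeg_strict_mono[OF u(1) X(2) u(3)] by simp_all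
  moreover have no_between: "\<not> (\<exists>s\<in>X. a \<lless> s \<and> s \<lless> b)"
    if "a \<in> X" "b \<in> X" "hdeg b = hdeg a + 1" for a b
    using hdeg_strict_mono[OF that(1)] hdeg_strict_mono[OF _ that(2)] that(3) by fastforce
  ultimately show "covers X leq x u" "covers X leq u y"
    unfolding covers_def using u X by simp_all
qed

lemma nontrivial_relative_homology_unique_middle:
  assumes xz: "covers X leq x z" and zy: "covers X leq z y"
    and unique: "\<And>u. u \<in> X \<Longrightarrow> x \<lless> u \<Longrightarrow> u \<lless> y \<Longrightarrow> u = z"
  defines "B \<equiv> hU y - {x, z}"
  shows "\<not> trivial_group (relative_homology_group (hdeg y + 1) (subsp (hU y - {z})) B)"
proof -
  note dec = unique_middle_decomposition[OF xz zy unique, folded B_def]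
  have X: "z \<in> X" "y \<in> X" using xz zy by (simp_all add: covers_def)
  have "hU z - {x} \<noteq> {}" by (rule acyclic_hU_minus_cover(1)[OF xz])
  then have rel_y: "trivial_group (relative_homology_group (hdeg y) (subsp (hU y)) B)"
    using trivial_relative_homology_attach_U_iff[OF dec(1) X(1) dec(2), of "hdeg y"] dec(3)
      acyclic_hU_minus_cover(2)[OF xz] by simp
  have "hU y \<noteq> {}" using zy by (auto simp: covers_def hatU_def)
  then have red_y: "\<not> trivial_group (reduced_homology_group (hdeg y) (subsp (hU y)))"
    using homology_concentrated_hdeg[OF X(2)] by (simp add: homology_concentrated_def)
  have "subtopology (subsp (hU y)) B = subsp B" "subtopology (subsp (hU y - {z})) B = subsp B"
    by (rule subtopology_subsp, auto simp: B_def)+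
  moreover have "\<not> trivial_group (reduced_homology_group (hdeg y) (subtopology (subsp (hU y)) B))"
    using trivial_reduced_homology_of_relative[OF rel_y] red_y by blast
  ultimately show ?thesis
    using trivial_reduced_homology_subtopology_of_relative[of "hdeg y + 1" "subsp (hU y - {z})" B]
      acyclic_hU_minus_cover(2)[OF zy] by auto
qed

lemma exists_other_between:
  assumes xz: "covers X leq x z" and zy: "covers X leq z y"
  shows "\<exists>u\<in>X. u \<noteq> z \<and> x \<lless> u \<and> u \<lless> y"
proof (rule ccontr)
  assume "\<not> ?thesis"
  then have unique: "\<And>u. u \<in> X \<Longrightarrow> x \<lless> u \<Longrightarrow> u \<lless> y \<Longrightarrow> u = z" by blast
  define B where "B = hU y - {x, z}"
  note dec = unique_middle_decomposition[OF xz zy unique, folded B_def]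
  have "x \<in> X" using xz by (simp add: covers_def)
  have deg: "hdeg y = hdeg x + 2" using hdeg_cover[OF xz] hdeg_cover[OF zy] by simp
  have rel: "\<not> trivial_group (relative_homology_group (hdeg y + 1) (subsp (hU y - {z})) B)"
    using nontrivial_relative_homology_unique_middle[OF xz zy unique] unfolding B_def .
  show False
  proof (cases "hU x = {}")
    case True
    then have "hdeg x = -1"
      using homology_concentrated_hdeg[OF \<open>x \<in> X\<close>] by (simp add: homology_concentrated_def)
    moreover have "hdeg y + 1 = 0"
      using rel trivial_relative_homology_attach_disjoint_U_iff[OF dec(1) \<open>x \<in> X\<close> dec(4)] dec(5) True
      by auto
    ultimately show False using deg by simp
  next
    case False
    then have "\<not> trivial_group (reduced_homology_group (hdeg y) (subsp (hU x)))"
      using rel trivial_relative_homology_attach_U_iff[OF dec(1) \<open>x \<in> X\<close> dec(4)] dec(5) by simp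
    then have "hdeg y = hdeg x"
      using homology_concentrated_hdeg[OF \<open>x \<in> X\<close>] False by (simp add: homology_concentrated_def)
    then show False using deg by simp
  qed
qed

end

theorem mainTheorem3:
  fixes X :: "'a set" and leq :: "'a \<Rightarrow> 'a \<Rightarrow> bool"
  assumes "finite_poset X leq"
    and "homologically_admissible X leq"
  shows "two_wide X leq"
proof -
  interpret admissible_poset X leq
    using assms by unfold_locales
  show ?thesis
    unfolding two_wide_def
  proof (intro ballI impI)
    fix x z y assume "covers X leq x z \<and> covers X leq z y"
    then obtain u where "u \<in> X" "u \<noteq> z" "pstrict leq x u" "pstrict leq u y"
      using exists_other_between by blast
    then show "\<exists>z'\<in>X. z' \<noteq> z \<and> covers X leq x z' \<and> covers X leq z' y"
      using covers_through_between \<open>covers X leq x z \<and> covers X leq z y\<close> by blast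
  qed
qed

end
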